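(* Let $a>0$, $b>0$, $S^1=\mathbb{R}/\mathbb{Z}$, and equip $\mathrm{Diff}(S^1)$ with the right-invariant metric given at the identity by $\langle\!\langle u,v\rangle\!\rangle=\int_{S^1}(a\,uv+b\,u_xv_x)\,dx$. Let $A=a-b\partial_x^2$ and define bilinear maps $$T(u,v)=A^{-1}\Big(a\,uv+\tfrac b2u_xv_x\Big),\qquad Q(u,v)=-\partial_x^2A^{-1}\Big(a\,uv+\tfrac b2u_xv_x\Big).$$ Then the sectional curvature $S(u,v)=\langle\!\langle R(u,v)v,u\rangle\!\rangle$ satisfies, for all vector fields $u,v$ on $S^1$, both $$S(u,v)=-\frac a2\int_{S^1}(uv_x-vu_x)^2\,dx+\frac ab\langle\!\langle T(u,u),T(v,v)\rangle\!\rangle-\frac ab\langle\!\langle T(u,v),T(u,v)\rangle\!\rangle$$ and $$S(u,v)=\frac1a\int_{S^1}\Big(a(uv_x-vu_x)+\tfrac b2(v_xu_{xx}-u_xv_{xx})\Big)^2dx+\frac ba\langle\!\langle Q(u,u),Q(v,v)\rangle\!\rangle-\frac ba\langle\!\langle Q(u,v),Q(u,v)\rangle\!\rangle.$$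
   Context: $R$ is the curvature tensor of the Levi-Civita connection of the right-invariant metric at the identity; vector fields on $S^1$ are identified with periodic functions. *)

theory Defs
  imports "HOL-Analysis.Analysis"
begin

text \<open>Vector fields on S^1 = R/Z: smooth (C-infinity) 1-periodic real functions on R.\<close>
definition smooth_fun :: "(real \<Rightarrow> real) \<Rightarrow> bool" where
  "smooth_fun f \<longleftrightarrow> (\<forall>n x. ((deriv ^^ n) f) differentiable (at x))"

definition vfield :: "(real \<Rightarrow> real) \<Rightarrow> bool" where
  "vfield f \<longleftrightarrow> smooth_fun f \<and> (\<forall>x. f (x + 1) = f x)"

definition intS1 :: "(real \<Rightarrow> real) \<Rightarrow> real" where
  "intS1 f = integral {0..1} f"

definition ip :: "real \<Rightarrow> real \<Rightarrow> (real \<Rightarrow> real) \<Rightarrow> (real \<Rightarrow> real) \<Rightarrow> real" where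
  "ip a b u v = intS1 (\<lambda>x. a * u x * v x + b * deriv u x * deriv v x)"

text \<open>Lie bracket of vector fields (the sign convention does not affect the curvature
  expression S(u,v)).\<close>
definition vbracket :: "(real \<Rightarrow> real) \<Rightarrow> (real \<Rightarrow> real) \<Rightarrow> real \<Rightarrow> real" where
  "vbracket u v = (\<lambda>x. u x * deriv v x - deriv u x * v x)"

text \<open>Levi-Civita connection of the invariant metric at the identity, via the Koszul formula
  for invariant fields: 2 <<nabla_u v, w>> = <<[u,v],w>> - <<[v,w],u>> + <<[w,u],v>>.\<close>
definition nabla :: "real \<Rightarrow> real \<Rightarrow> (real \<Rightarrow> real) \<Rightarrow> (real \<Rightarrow> real) \<Rightarrow> real \<Rightarrow> real" where
  "nabla a b u v = (THE z. vfield z \<and> (\<forall>w. vfield w \<longrightarrow>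
      ip a b z w = (ip a b (vbracket u v) w - ip a b (vbracket v w) u + ip a b (vbracket w u) v) / 2))"

definition curv :: "real \<Rightarrow> real \<Rightarrow> (real \<Rightarrow> real) \<Rightarrow> (real \<Rightarrow> real) \<Rightarrow> (real \<Rightarrow> real) \<Rightarrow> real \<Rightarrow> real" where
  "curv a b u v w = (\<lambda>x. nabla a b u (nabla a b v w) x - nabla a b v (nabla a b u w) x
      - nabla a b (vbracket u v) w x)"

definition sect :: "real \<Rightarrow> real \<Rightarrow> (real \<Rightarrow> real) \<Rightarrow> (real \<Rightarrow> real) \<Rightarrow> real" where
  "sect a b u v = ip a b (curv a b u v v) u"

definition Ainv :: "real \<Rightarrow> real \<Rightarrow> (real \<Rightarrow> real) \<Rightarrow> real \<Rightarrow> real" where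
  "Ainv a b f = (THE g. vfield g \<and> (\<forall>x. a * g x - b * deriv (deriv g) x = f x))"

definition Tmap :: "real \<Rightarrow> real \<Rightarrow> (real \<Rightarrow> real) \<Rightarrow> (real \<Rightarrow> real) \<Rightarrow> real \<Rightarrow> real" where
  "Tmap a b u v = Ainv a b (\<lambda>x. a * u x * v x + b / 2 * deriv u x * deriv v x)"

definition Qmap :: "real \<Rightarrow> real \<Rightarrow> (real \<Rightarrow> real) \<Rightarrow> (real \<Rightarrow> real) \<Rightarrow> real \<Rightarrow> real" where
  "Qmap a b u v = (\<lambda>x. - deriv (deriv (Ainv a b (\<lambda>y. a * u y * v y + b / 2 * deriv u y * deriv v y))) x)"

end

theory Submission
  imports Defs
begin

text \<open>
  With \<open>A = a - b \<partial>\<^sup>2\<close> the metric is \<open>\<langle>\<langle>f, g\<rangle>\<rangle> = \<integral> (A f) g\<close>, and \<open>A\<close> is invertible on periodic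
  functions: variation of constants produces a periodic solution of \<open>A g = f\<close>, positivity of the
  metric makes it unique. Solving the Koszul formula then gives the explicit connection
  \<open>\<nabla>\<^sub>u v = u v\<^sub>x + \<partial>\<^sub>x T(u,v)\<close>. Metric compatibility and vanishing torsion reduce
  \<open>S(u,v)\<close> to \<open>-\<langle>\<langle>\<nabla>\<^sub>u u, \<nabla>\<^sub>v v\<rangle>\<rangle> - \<langle>\<langle>[u,v], \<nabla>\<^sub>u v\<rangle>\<rangle> + \<langle>\<langle>\<nabla>\<^sub>u v, \<nabla>\<^sub>u v\<rangle>\<rangle> - \<langle>\<langle>\<nabla>\<^bsub>[u,v]\<^esub> v, u\<rangle>\<rangle>\<close>.
  Integrating by parts, a pairing \<open>\<langle>\<langle>\<partial>T, \<partial>T'\<rangle>\<rangle>\<close> equals \<open>-a/b \<langle>\<langle>T, T'\<rangle>\<rangle>\<close> plus a local term,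
  and all local terms add up, modulo an exact derivative, to \<open>-a/2 (u v\<^sub>x - v u\<^sub>x)\<^sup>2\<close>.
  The second formula follows from the first because \<open>Q = -\<partial>\<^sup>2 T\<close>: the difference of the two
  right-hand sides vanishes pointwise by a Lagrange-type identity.
\<close>

section \<open>Smooth periodic functions\<close>

fun differentiable_upto :: "nat \<Rightarrow> (real \<Rightarrow> real) \<Rightarrow> bool" where
  "differentiable_upto 0 f \<longleftrightarrow> (\<forall>x. f differentiable (at x))"
| "differentiable_upto (Suc n) f \<longleftrightarrow>
     (\<forall>x. f differentiable (at x)) \<and> differentiable_upto n (deriv f)"

lemma differentiable_upto_iff:
  "differentiable_upto n f \<longleftrightarrow> (\<forall>m\<le>n. \<forall>x. (deriv ^^ m) f differentiable (at x))"
proof (induction n arbitrary: f)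
  case 0
  then show ?case by simp
next
  case (Suc n)
  have "(\<forall>m\<le>Suc n. \<forall>x. (deriv ^^ m) f differentiable (at x)) \<longleftrightarrow>
        (\<forall>x. f differentiable (at x)) \<and> (\<forall>m\<le>n. \<forall>x. (deriv ^^ m) (deriv f) differentiable (at x))"
    (is "?L \<longleftrightarrow> ?R")
  proof
    assume L: ?L
    show ?R
      using L[rule_format, of 0] L by (simp, metis Suc_le_mono funpow_Suc_right o_apply)
  next
    assume R: ?R
    show ?L
    proof (intro allI impI)
      fix m x
      assume "m \<le> Suc n"
      then show "(deriv ^^ m) f differentiable (at x)"
        using R by (cases m) (auto simp: funpow_Suc_right simp del: funpow.simps)
    qed
  qed
  then show ?case using Suc by simp
qed

lemma smooth_fun_iff_differentiable_upto: "smooth_fun f \<longleftrightarrow> (\<forall>n. differentiable_upto n f)"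
  unfolding smooth_fun_def differentiable_upto_iff by blast

lemma differentiable_upto_Suc_imp: "differentiable_upto (Suc n) f \<Longrightarrow> differentiable_upto n f"
  by (induction n arbitrary: f) auto

lemma deriv_add_fun:
  fixes f g :: "real \<Rightarrow> real"
  assumes "\<And>x. f differentiable (at x)" "\<And>x. g differentiable (at x)"
  shows "deriv (\<lambda>x. f x + g x) = (\<lambda>x. deriv f x + deriv g x)"
  using DERIV_add[OF assms[THEN DERIV_deriv_iff_real_differentiable[THEN iffD2]]]
  by (auto intro!: ext DERIV_imp_deriv)

lemma deriv_mult_fun:
  fixes f g :: "real \<Rightarrow> real"
  assumes "\<And>x. f differentiable (at x)" "\<And>x. g differentiable (at x)"
  shows "deriv (\<lambda>x. f x * g x) = (\<lambda>x. f x * deriv g x + deriv f x * g x)"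
  using DERIV_mult[OF assms[THEN DERIV_deriv_iff_real_differentiable[THEN iffD2]]]
  by (auto intro!: ext DERIV_imp_deriv simp: algebra_simps)

lemma differentiable_upto_add:
  "differentiable_upto n f \<Longrightarrow> differentiable_upto n g \<Longrightarrow> differentiable_upto n (\<lambda>x. f x + g x)"
  by (induction n arbitrary: f g) (auto simp: deriv_add_fun)

lemma differentiable_upto_mult:
  "differentiable_upto n f \<Longrightarrow> differentiable_upto n g \<Longrightarrow> differentiable_upto n (\<lambda>x. f x * g x)"
proof (induction n arbitrary: f g)
  case 0
  then show ?case by simp
next
  case (Suc n)
  have "differentiable_upto n (\<lambda>x. f x * deriv g x)" "differentiable_upto n (\<lambda>x. deriv f x * g x)"
    using Suc differentiable_upto_Suc_imp by auto
  then show ?case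
    using Suc.prems by (auto intro!: differentiable_upto_add simp: deriv_mult_fun)
qed

lemma differentiable_upto_const: "differentiable_upto n (\<lambda>x. c)"
  by (induction n arbitrary: c) auto

lemma differentiable_upto_exp: "differentiable_upto n (\<lambda>x. c * exp (k * x))"
proof (induction n arbitrary: c)
  case 0
  show ?case unfolding differentiable_upto.simps real_differentiable_def
    by (auto intro!: derivative_eq_intros)
next
  case (Suc n)
  have "deriv (\<lambda>x. c * exp (k * x)) = (\<lambda>x. (c * k) * exp (k * x))"
    by (rule ext, rule DERIV_imp_deriv) (auto intro!: derivative_eq_intros)
  then show ?case using Suc unfolding differentiable_upto.simps real_differentiable_def
    by (auto intro!: derivative_eq_intros)
qed

lemma smooth_fun_add: "smooth_fun f \<Longrightarrow> smooth_fun g \<Longrightarrow> smooth_fun (\<lambda>x. f x + g x)"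
  by (simp add: smooth_fun_iff_differentiable_upto differentiable_upto_add)

lemma smooth_fun_mult: "smooth_fun f \<Longrightarrow> smooth_fun g \<Longrightarrow> smooth_fun (\<lambda>x. f x * g x)"
  by (simp add: smooth_fun_iff_differentiable_upto differentiable_upto_mult)

lemma smooth_fun_const: "smooth_fun (\<lambda>x. c)"
  by (simp add: smooth_fun_iff_differentiable_upto differentiable_upto_const)

lemma smooth_fun_exp: "smooth_fun (\<lambda>x. c * exp (k * x))"
  by (simp add: smooth_fun_iff_differentiable_upto differentiable_upto_exp)

lemma smooth_fun_deriv: "smooth_fun f \<Longrightarrow> smooth_fun (deriv f)"
  by (metis smooth_fun_iff_differentiable_upto differentiable_upto.simps(2))

lemma smooth_fun_differentiable: "smooth_fun f \<Longrightarrow> f differentiable (at x)"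
  by (metis smooth_fun_iff_differentiable_upto differentiable_upto.simps(1))

lemma smooth_fun_antiderivative:
  assumes "\<And>x. (F has_real_derivative f x) (at x)" and "smooth_fun f"
  shows "smooth_fun F"
proof -
  have "deriv F = f" using assms(1) by (auto intro!: ext DERIV_imp_deriv)
  moreover have "F differentiable (at x)" for x
    using assms(1) real_differentiable_def by blast
  ultimately have "differentiable_upto (Suc n) F" for n
    using assms(2) by (simp add: smooth_fun_iff_differentiable_upto)
  then show ?thesis
    by (metis smooth_fun_iff_differentiable_upto differentiable_upto_Suc_imp)
qed

lemma vfield_smooth: "vfield f \<Longrightarrow> smooth_fun f"
  by (simp add: vfield_def)

lemma vfield_periodic: "vfield f \<Longrightarrow> f (x + 1) = f x"
  by (simp add: vfield_def)

lemma vfield_differentiable: "vfield f \<Longrightarrow> f differentiable (at x)"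
  by (simp add: vfield_def smooth_fun_differentiable)

lemma vfield_has_real_derivative: "vfield f \<Longrightarrow> (f has_real_derivative deriv f x) (at x)"
  by (simp add: DERIV_deriv_iff_real_differentiable vfield_differentiable)

lemma vfield_const [simp]: "vfield (\<lambda>x. c)"
  by (simp add: vfield_def smooth_fun_const)

lemma vfield_add [simp]: "vfield f \<Longrightarrow> vfield g \<Longrightarrow> vfield (\<lambda>x. f x + g x)"
  by (simp add: vfield_def smooth_fun_add)

lemma vfield_mult [simp]: "vfield f \<Longrightarrow> vfield g \<Longrightarrow> vfield (\<lambda>x. f x * g x)"
  by (simp add: vfield_def smooth_fun_mult)

lemma vfield_cmult [simp]: "vfield f \<Longrightarrow> vfield (\<lambda>x. c * f x)"
  using vfield_mult[OF vfield_const] by simp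

lemma vfield_minus [simp]: "vfield f \<Longrightarrow> vfield (\<lambda>x. - f x)"
  using vfield_cmult[of f "-1"] by simp

lemma vfield_diff [simp]: "vfield f \<Longrightarrow> vfield g \<Longrightarrow> vfield (\<lambda>x. f x - g x)"
  using vfield_add[of f "\<lambda>x. - g x"] by simp

lemma vfield_divide [simp]: "vfield f \<Longrightarrow> vfield (\<lambda>x. f x / c)"
  using vfield_cmult[of f "1 / c"] by simp

lemma vfield_power2 [simp]: "vfield f \<Longrightarrow> vfield (\<lambda>x. (f x)\<^sup>2)"
  using vfield_mult[of f f] by (simp add: power2_eq_square)

lemma vfield_deriv [simp]: "vfield f \<Longrightarrow> vfield (deriv f)"
proof -
  assume f: "vfield f"
  have "deriv f (x + 1) = deriv f x" for x
  proof -
    have "((\<lambda>x. f (x + 1)) has_real_derivative deriv f (x + 1)) (at x)"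
      using vfield_has_real_derivative[OF f] DERIV_shift by blast
    moreover have "(\<lambda>x. f (x + 1)) = f" using f by (auto simp: vfield_periodic)
    ultimately show ?thesis using DERIV_imp_deriv by fastforce
  qed
  then show ?thesis using f by (simp add: vfield_def smooth_fun_deriv)
qed

lemma deriv_vfield_add [simp]:
  "vfield f \<Longrightarrow> vfield g \<Longrightarrow> deriv (\<lambda>x. f x + g x) = (\<lambda>x. deriv f x + deriv g x)"
  by (rule deriv_add_fun) (auto simp: vfield_differentiable)

lemma deriv_vfield_mult [simp]:
  "vfield f \<Longrightarrow> vfield g \<Longrightarrow> deriv (\<lambda>x. f x * g x) = (\<lambda>x. f x * deriv g x + deriv f x * g x)"
  by (rule deriv_mult_fun) (auto simp: vfield_differentiable)

lemma deriv_vfield_cmult [simp]: "vfield f \<Longrightarrow> deriv (\<lambda>x. c * f x) = (\<lambda>x. c * deriv f x)"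
  using deriv_vfield_mult[OF vfield_const, of f c] by simp

lemma deriv_vfield_minus [simp]: "vfield f \<Longrightarrow> deriv (\<lambda>x. - f x) = (\<lambda>x. - deriv f x)"
  using deriv_vfield_cmult[of f "-1"] by simp

lemma deriv_vfield_diff [simp]:
  "vfield f \<Longrightarrow> vfield g \<Longrightarrow> deriv (\<lambda>x. f x - g x) = (\<lambda>x. deriv f x - deriv g x)"
  using deriv_vfield_add[of f "\<lambda>x. - g x"] by simp

lemma deriv_vfield_divide [simp]: "vfield f \<Longrightarrow> deriv (\<lambda>x. f x / c) = (\<lambda>x. deriv f x / c)"
  using deriv_vfield_cmult[of f "1 / c"] by simp

lemma vfield_shift_int: "vfield f \<Longrightarrow> f (x + of_int n) = f x"
proof -
  assume f: "vfield f"
  have nat: "f (y + real m) = f y" for y m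
    by (induction m) (simp_all add: f vfield_periodic[OF f, of "y + real _", symmetric] algebra_simps)
  show ?thesis
  proof (cases "n \<ge> 0")
    case True
    then show ?thesis using nat[of x "nat n"] by simp
  next
    case False
    then show ?thesis using nat[of "x + of_int n" "nat (- n)"] by simp
  qed
qed

lemma vfield_eq_0_if_eq_0_on_period:
  assumes "vfield f" and "\<And>x. x \<in> {0..1} \<Longrightarrow> f x = 0"
  shows "f x = 0"
proof -
  have "f x = f (frac x + of_int \<lfloor>x\<rfloor>)" by (simp add: frac_def)
  also have "\<dots> = f (frac x)" by (rule vfield_shift_int[OF assms(1)])
  also have "\<dots> = 0" using assms(2) frac_lt_1[of x] frac_ge_0[of x] by simp
  finally show ?thesis .
qed

section \<open>Integration over the circle and the metric\<close>

lemma vfield_continuous_on: "vfield f \<Longrightarrow> continuous_on S f"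
  by (meson continuous_at_imp_continuous_on differentiable_imp_continuous_within vfield_differentiable)

lemma vfield_integrable: "vfield f \<Longrightarrow> f integrable_on {0..1}"
  by (simp add: integrable_continuous_real vfield_continuous_on)

lemma intS1_add: "vfield f \<Longrightarrow> vfield g \<Longrightarrow> intS1 (\<lambda>x. f x + g x) = intS1 f + intS1 g"
  unfolding intS1_def by (simp add: integral_add vfield_integrable)

lemma intS1_diff: "vfield f \<Longrightarrow> vfield g \<Longrightarrow> intS1 (\<lambda>x. f x - g x) = intS1 f - intS1 g"
  unfolding intS1_def by (simp add: integral_diff vfield_integrable)

lemma intS1_cmult: "intS1 (\<lambda>x. c * f x) = c * intS1 f"
  unfolding intS1_def by simp

lemma intS1_divide: "intS1 (\<lambda>x. f x / c) = intS1 f / c"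
  unfolding intS1_def by simp

lemma intS1_minus: "intS1 (\<lambda>x. - f x) = - intS1 f"
  unfolding intS1_def by simp

lemma intS1_zero [simp]: "intS1 (\<lambda>x. 0) = 0"
  unfolding intS1_def by simp

lemma intS1_deriv: "vfield h \<Longrightarrow> intS1 (deriv h) = 0"
proof -
  assume h: "vfield h"
  have "(deriv h has_integral h 1 - h 0) {0..1}"
    by (rule fundamental_theorem_of_calculus)
       (auto simp: has_real_derivative_iff_has_vector_derivative[symmetric]
             intro: DERIV_subset vfield_has_real_derivative[OF h])
  moreover have "h 1 = h 0" using vfield_periodic[OF h, of 0] by simp
  ultimately show ?thesis unfolding intS1_def by (simp add: integral_unique)
qed

lemma intS1_eq_by_deriv:
  assumes "vfield g" and "vfield h" and "\<And>x. f x = g x + deriv h x"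
  shows "intS1 f = intS1 g"
proof -
  have "f = (\<lambda>x. g x + deriv h x)" using assms(3) by auto
  then show ?thesis using assms(1,2) by (simp add: intS1_add intS1_deriv)
qed

lemma intS1_nonneg_eq_0:
  assumes "vfield f" and "\<And>x. f x \<ge> 0" and "intS1 f = 0"
  shows "f x = 0"
proof (rule vfield_eq_0_if_eq_0_on_period[OF assms(1)])
  fix y :: real
  assume "y \<in> {0..1}"
  moreover have "(f has_integral 0) (cbox 0 1)"
    using assms(3) vfield_integrable[OF assms(1)] unfolding intS1_def
    by (metis box_real(2) has_integral_integral)
  ultimately show "f y = 0"
    using has_integral_0_cbox_imp_0[of 0 1 f y] assms(2) vfield_continuous_on[OF assms(1)] by simp
qed

lemma ip_sym: "ip a b f g = ip a b g f"
  unfolding ip_def by (simp add: algebra_simps)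

lemma ip_add_left:
  "vfield f \<Longrightarrow> vfield g \<Longrightarrow> vfield h \<Longrightarrow> ip a b (\<lambda>x. f x + g x) h = ip a b f h + ip a b g h"
  unfolding ip_def by (subst intS1_add[symmetric]) (simp_all add: algebra_simps)

lemma ip_cmult_left: "vfield f \<Longrightarrow> ip a b (\<lambda>x. c * f x) h = c * ip a b f h"
  unfolding ip_def by (subst intS1_cmult[symmetric]) (simp add: algebra_simps)

lemma ip_minus_left: "vfield f \<Longrightarrow> ip a b (\<lambda>x. - f x) h = - ip a b f h"
  using ip_cmult_left[of f a b "-1" h] by simp

lemma ip_diff_left:
  "vfield f \<Longrightarrow> vfield g \<Longrightarrow> vfield h \<Longrightarrow> ip a b (\<lambda>x. f x - g x) h = ip a b f h - ip a b g h"
  using ip_add_left[of f "\<lambda>x. - g x" h a b] ip_minus_left[of g a b h] by simp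

lemma ip_self_eq_0:
  assumes "a > 0" and "b > 0" and "vfield d" and "ip a b d d = 0"
  shows "d = (\<lambda>x. 0)"
proof
  fix x
  let ?e = "\<lambda>x. a * (d x)\<^sup>2 + b * (deriv d x)\<^sup>2"
  have nonneg: "a * (d y)\<^sup>2 \<ge> 0" "b * (deriv d y)\<^sup>2 \<ge> 0" for y
    using assms(1,2) by simp_all
  have "intS1 ?e = 0" using assms(4) unfolding ip_def by (simp add: power2_eq_square mult.assoc)
  moreover have "vfield ?e" using assms(3) by simp
  ultimately have "?e x = 0"
    using intS1_nonneg_eq_0[of ?e] nonneg add_nonneg_nonneg by blast
  then have "a * (d x)\<^sup>2 = 0" using nonneg[of x] by linarith
  then show "d x = 0" using assms(1) by simp
qed

lemma ip_eq_all_imp_eq: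
  assumes "a > 0" and "b > 0" and "vfield z1" and "vfield z2"
    and "\<And>w. vfield w \<Longrightarrow> ip a b z1 w = ip a b z2 w"
  shows "z1 = z2"
proof -
  let ?d = "\<lambda>x. z1 x - z2 x"
  have "ip a b ?d ?d = ip a b z1 ?d - ip a b z2 ?d"
    using assms(3,4) by (simp add: ip_diff_left)
  also have "\<dots> = 0" using assms(3,4) assms(5)[of ?d] by simp
  finally have "?d = (\<lambda>x. 0)" by (rule ip_self_eq_0[OF assms(1,2) vfield_diff[OF assms(3,4)]])
  then show ?thesis by (simp add: fun_eq_iff)
qed

section \<open>The inertia operator and its inverse\<close>

definition Aop :: "real \<Rightarrow> real \<Rightarrow> (real \<Rightarrow> real) \<Rightarrow> real \<Rightarrow> real" where
  "Aop a b f = (\<lambda>x. a * f x - b * deriv (deriv f) x)"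

lemma vfield_Aop [simp]: "vfield f \<Longrightarrow> vfield (Aop a b f)"
  by (simp add: Aop_def)

lemma Aop_deriv: "vfield f \<Longrightarrow> Aop a b (deriv f) = deriv (Aop a b f)"
  by (simp add: Aop_def)

lemma ip_eq_intS1_Aop: "vfield f \<Longrightarrow> vfield g \<Longrightarrow> ip a b f g = intS1 (\<lambda>x. Aop a b f x * g x)"
  unfolding ip_def Aop_def
  by (rule intS1_eq_by_deriv[where h = "\<lambda>x. b * (deriv f x * g x)"]) (simp_all add: algebra_simps)

lemma Aop_eq_0_imp:
  assumes "a > 0" and "b > 0" and "vfield d" and "Aop a b d = (\<lambda>x. 0)"
  shows "d = (\<lambda>x. 0)"
proof (rule ip_self_eq_0[OF assms(1-3)])
  show "ip a b d d = 0" using ip_eq_intS1_Aop[OF assms(3,3)] assms(4) by simp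
qed

lemma exists_quasiperiodic_antiderivative:
  fixes \<psi> :: "real \<Rightarrow> real"
  assumes cont: "\<And>x. isCont \<psi> x" and "q \<noteq> 1" and per: "\<And>x. \<psi> (x + 1) = q * \<psi> x"
  shows "\<exists>\<Phi>. (\<forall>x. (\<Phi> has_real_derivative \<psi> x) (at x)) \<and> (\<forall>x. \<Phi> (x + 1) = q * \<Phi> x)"
proof -
  obtain F where "\<And>x. (F has_vector_derivative \<psi> x) (at x)"
    using einterval_antiderivative[of "-\<infinity>" "\<infinity>" \<psi>] cont by auto
  then have F: "(F has_real_derivative \<psi> x) (at x)" for x
    using has_real_derivative_iff_has_vector_derivative by blast
  \<comment> \<open>The defect \<open>F (x + 1) - q * F x\<close> has derivative zero; a shift of \<open>F\<close> removes the constant.\<close>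
  define D where "D x = F (x + 1) - q * F x" for x
  have "(D has_real_derivative 0) (at x)" for x
  proof -
    have "((\<lambda>x. F (x + 1)) has_real_derivative \<psi> (x + 1)) (at x)"
      using F[of "x + 1"] DERIV_shift by blast
    then have "(D has_real_derivative \<psi> (x + 1) - q * \<psi> x) (at x)"
      unfolding D_def by (auto intro!: derivative_eq_intros F)
    then show ?thesis using per by simp
  qed
  then have D_const: "D x = D 0" for x using DERIV_isconst_all by blast
  define \<Phi> where "\<Phi> x = F x + D 0 / (q - 1)" for x
  have "(\<Phi> has_real_derivative \<psi> x) (at x)" for x
    unfolding \<Phi>_def by (auto intro!: derivative_eq_intros F)
  moreover have "\<Phi> (x + 1) = q * \<Phi> x" for x
  proof -
    have "F (x + 1) = q * F x + D 0" using D_const[of x] unfolding D_def by simp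
    then show ?thesis using \<open>q \<noteq> 1\<close> unfolding \<Phi>_def by (simp add: field_simps)
  qed
  ultimately show ?thesis by blast
qed

lemma variation_of_constants:
  fixes k :: real
  assumes "k \<noteq> 0"
    and \<Phi>1: "\<And>x. (\<Phi>1 has_real_derivative - h x * exp (- k * x) / (2 * k)) (at x)"
    and \<Phi>2: "\<And>x. (\<Phi>2 has_real_derivative h x * exp (k * x) / (2 * k)) (at x)"
  defines "g \<equiv> \<lambda>x. exp (k * x) * \<Phi>1 x + exp (- k * x) * \<Phi>2 x"
  shows "deriv (deriv g) x = k\<^sup>2 * g x - h x"
proof -
  define g' where "g' x = k * (exp (k * x) * \<Phi>1 x - exp (- k * x) * \<Phi>2 x)" for x
  have "(g has_real_derivative g' x) (at x)" for x
    unfolding g_def g'_def using \<open>k \<noteq> 0\<close>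
    by (auto intro!: derivative_eq_intros \<Phi>1 \<Phi>2 simp: field_simps exp_add[symmetric])
  then have "deriv g = g'" by (auto intro!: ext DERIV_imp_deriv)
  moreover have "(g' has_real_derivative k\<^sup>2 * g x - h x) (at x)" for x
    unfolding g_def g'_def using \<open>k \<noteq> 0\<close>
    by (auto intro!: derivative_eq_intros \<Phi>1 \<Phi>2 simp: field_simps exp_add[symmetric] power2_eq_square)
  ultimately show ?thesis by (simp add: DERIV_imp_deriv)
qed

lemma exists_Aop_solution:
  assumes "a > 0" and "b > 0" and "vfield f"
  shows "\<exists>g. vfield g \<and> Aop a b g = f"
proof -
  define k where "k = sqrt (a / b)"
  have "k > 0" and "b * k\<^sup>2 = a" using assms(1,2) by (simp_all add: k_def)
  define \<psi>1 where "\<psi>1 x = - (f x / b) * exp (- k * x) / (2 * k)" for x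
  define \<psi>2 where "\<psi>2 x = (f x / b) * exp (k * x) / (2 * k)" for x
  have smooth: "smooth_fun \<psi>1" "smooth_fun \<psi>2"
    using smooth_fun_mult[OF vfield_smooth[OF assms(3)] smooth_fun_exp, of "- 1 / (2 * k * b)" "- k"]
          smooth_fun_mult[OF vfield_smooth[OF assms(3)] smooth_fun_exp, of "1 / (2 * k * b)" k]
    unfolding \<psi>1_def \<psi>2_def by (simp_all add: field_simps)
  have cont: "isCont \<psi>1 x" "isCont \<psi>2 x" for x
    using smooth by (simp_all add: smooth_fun_differentiable differentiable_imp_continuous_within)
  have "\<psi>1 (x + 1) = exp (- k) * \<psi>1 x" "\<psi>2 (x + 1) = exp k * \<psi>2 x" for x
    unfolding \<psi>1_def \<psi>2_def using vfield_periodic[OF assms(3), of x]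
    by (simp_all add: algebra_simps exp_add[symmetric])
  moreover have "exp (- k) \<noteq> 1" "exp k \<noteq> 1" using \<open>k > 0\<close> by simp_all
  ultimately obtain \<Phi>1 \<Phi>2
    where \<Phi>1: "\<And>x. (\<Phi>1 has_real_derivative \<psi>1 x) (at x)" "\<And>x. \<Phi>1 (x + 1) = exp (- k) * \<Phi>1 x"
      and \<Phi>2: "\<And>x. (\<Phi>2 has_real_derivative \<psi>2 x) (at x)" "\<And>x. \<Phi>2 (x + 1) = exp k * \<Phi>2 x"
    using exists_quasiperiodic_antiderivative[of \<psi>1] exists_quasiperiodic_antiderivative[of \<psi>2] cont
    by metis
  define g where "g x = exp (k * x) * \<Phi>1 x + exp (- k * x) * \<Phi>2 x" for x
  have "deriv (deriv g) x = k\<^sup>2 * g x - f x / b" for x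
    using variation_of_constants[of k \<Phi>1 "\<lambda>x. f x / b" \<Phi>2] \<Phi>1(1) \<Phi>2(1) \<open>k > 0\<close>
    unfolding g_def \<psi>1_def \<psi>2_def by (simp add: fun_eq_iff)
  then have "a * g x - b * deriv (deriv g) x = f x" for x
    using assms(2) by (simp add: \<open>b * k\<^sup>2 = a\<close>[symmetric] field_simps)
  then have "Aop a b g = f" by (simp add: Aop_def fun_eq_iff)
  moreover have "smooth_fun g"
    unfolding g_def
    using smooth_fun_add[OF smooth_fun_mult[OF smooth_fun_exp smooth_fun_antiderivative[OF \<Phi>1(1) smooth(1)]]
                            smooth_fun_mult[OF smooth_fun_exp smooth_fun_antiderivative[OF \<Phi>2(1) smooth(2)]],
                        of 1 k 1 "- k"]
    by simp
  moreover have "g (x + 1) = g x" for x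
    unfolding g_def \<Phi>1(2) \<Phi>2(2) by (simp add: algebra_simps exp_add[symmetric])
  ultimately show ?thesis unfolding vfield_def by blast
qed

lemma Aop_diff: "vfield f \<Longrightarrow> vfield g \<Longrightarrow> Aop a b (\<lambda>x. f x - g x) = (\<lambda>x. Aop a b f x - Aop a b g x)"
  by (simp add: Aop_def algebra_simps)

lemma Aop_injective:
  assumes "a > 0" and "b > 0" and "vfield g1" and "vfield g2" and "Aop a b g1 = Aop a b g2"
  shows "g1 = g2"
proof -
  have "(\<lambda>x. g1 x - g2 x) = (\<lambda>x. 0)"
    using Aop_eq_0_imp[OF assms(1,2) vfield_diff[OF assms(3,4)]] assms(3-5) by (simp add: Aop_diff)
  then show ?thesis by (simp add: fun_eq_iff)
qed

lemma Ainv_eq_The: "Ainv a b f = (THE g. vfield g \<and> Aop a b g = f)"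
  by (simp add: Ainv_def Aop_def fun_eq_iff)

lemma Ainv_solves:
  assumes "a > 0" and "b > 0" and "vfield f"
  shows "vfield (Ainv a b f) \<and> Aop a b (Ainv a b f) = f"
proof -
  have "\<exists>!g. vfield g \<and> Aop a b g = f"
    using exists_Aop_solution[OF assms] Aop_injective[OF assms(1,2)] by blast
  then show ?thesis unfolding Ainv_eq_The by (rule theI')
qed

lemma vfield_Ainv [simp]: "a > 0 \<Longrightarrow> b > 0 \<Longrightarrow> vfield f \<Longrightarrow> vfield (Ainv a b f)"
  using Ainv_solves by blast

lemma Aop_Ainv: "a > 0 \<Longrightarrow> b > 0 \<Longrightarrow> vfield f \<Longrightarrow> Aop a b (Ainv a b f) = f"
  using Ainv_solves by blast

definition Tsource :: "real \<Rightarrow> real \<Rightarrow> (real \<Rightarrow> real) \<Rightarrow> (real \<Rightarrow> real) \<Rightarrow> real \<Rightarrow> real" where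
  "Tsource a b x y = (\<lambda>t. a * x t * y t + b / 2 * deriv x t * deriv y t)"

lemma vfield_Tsource [simp]: "vfield x \<Longrightarrow> vfield y \<Longrightarrow> vfield (Tsource a b x y)"
  by (simp add: Tsource_def)

lemma vfield_Tmap [simp]: "a > 0 \<Longrightarrow> b > 0 \<Longrightarrow> vfield x \<Longrightarrow> vfield y \<Longrightarrow> vfield (Tmap a b x y)"
  by (simp add: Tmap_def)

lemma Aop_Tmap: "a > 0 \<Longrightarrow> b > 0 \<Longrightarrow> vfield x \<Longrightarrow> vfield y \<Longrightarrow> Aop a b (Tmap a b x y) = Tsource a b x y"
  by (simp add: Tmap_def Tsource_def Aop_Ainv)

section \<open>The Levi-Civita connection\<close>

lemma vfield_vbracket [simp]: "vfield x \<Longrightarrow> vfield y \<Longrightarrow> vfield (vbracket x y)"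
  by (simp add: vbracket_def)

definition coad :: "real \<Rightarrow> real \<Rightarrow> (real \<Rightarrow> real) \<Rightarrow> (real \<Rightarrow> real) \<Rightarrow> real \<Rightarrow> real" where
  "coad a b y x = (\<lambda>t. 2 * Aop a b x t * deriv y t + deriv (Aop a b x) t * y t)"

lemma vfield_coad [simp]: "vfield x \<Longrightarrow> vfield y \<Longrightarrow> vfield (coad a b y x)"
  by (simp add: coad_def)

lemma ip_vbracket_left:
  assumes "vfield w" and "vfield y" and "vfield x"
  shows "ip a b (vbracket w y) x = intS1 (\<lambda>t. w t * coad a b y x t)"
proof -
  have "ip a b (vbracket w y) x = intS1 (\<lambda>t. Aop a b x t * vbracket w y t)"
    using ip_sym ip_eq_intS1_Aop assms by (metis vfield_vbracket)
  also have "\<dots> = intS1 (\<lambda>t. w t * coad a b y x t)"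
    by (rule intS1_eq_by_deriv[where h = "\<lambda>t. - (w t * (Aop a b x t * y t))"])
       (simp_all add: assms coad_def vbracket_def algebra_simps)
  finally show ?thesis .
qed

lemma ip_vbracket_swap:
  "vfield x \<Longrightarrow> vfield y \<Longrightarrow> ip a b (vbracket y x) w = - ip a b (vbracket x y) w"
  using ip_minus_left[of "vbracket x y" a b w] by (simp add: vbracket_def algebra_simps)

lemma Aop_connection:
  assumes "a > 0" and "b > 0" and "vfield u" and "vfield v"
  shows "Aop a b (\<lambda>t. u t * deriv v t + deriv (Tmap a b u v) t) t
       = (Aop a b (vbracket u v) t + coad a b v u t + coad a b u v t) / 2"
proof -
  have "Aop a b (\<lambda>t. u t * deriv v t + deriv (Tmap a b u v) t) t
      = Aop a b (\<lambda>t. u t * deriv v t) t + deriv (Aop a b (Tmap a b u v)) t"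
    using assms by (simp add: Aop_def algebra_simps)
  also have "\<dots> = Aop a b (\<lambda>t. u t * deriv v t) t + deriv (Tsource a b u v) t"
    by (simp only: Aop_Tmap assms)
  finally show ?thesis
    using assms by (simp add: Tsource_def Aop_def coad_def vbracket_def field_simps)
qed

lemma koszul_explicit:
  assumes "a > 0" and "b > 0" and "vfield u" and "vfield v" and "vfield w"
  shows "ip a b (\<lambda>t. u t * deriv v t + deriv (Tmap a b u v) t) w
       = (ip a b (vbracket u v) w - ip a b (vbracket v w) u + ip a b (vbracket w u) v) / 2"
proof -
  have "ip a b (\<lambda>t. u t * deriv v t + deriv (Tmap a b u v) t) w
      = intS1 (\<lambda>t. ((Aop a b (vbracket u v) t * w t + w t * coad a b v u t) + w t * coad a b u v t) / 2)"
    using assms by (simp add: ip_eq_intS1_Aop Aop_connection algebra_simps add_divide_distrib)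
  also have "\<dots> = (ip a b (vbracket u v) w + ip a b (vbracket w v) u + ip a b (vbracket w u) v) / 2"
    using assms by (simp add: intS1_divide intS1_add ip_vbracket_left[of w] ip_eq_intS1_Aop[of "vbracket u v"])
  finally show ?thesis using ip_vbracket_swap[OF assms(5,4)] by simp
qed

lemma nabla_eq:
  assumes "a > 0" and "b > 0" and "vfield u" and "vfield v"
  shows "nabla a b u v = (\<lambda>t. u t * deriv v t + deriv (Tmap a b u v) t)"
  unfolding nabla_def
proof (rule the_equality)
  show "vfield (\<lambda>t. u t * deriv v t + deriv (Tmap a b u v) t) \<and> (\<forall>w. vfield w \<longrightarrow>
      ip a b (\<lambda>t. u t * deriv v t + deriv (Tmap a b u v) t) w
        = (ip a b (vbracket u v) w - ip a b (vbracket v w) u + ip a b (vbracket w u) v) / 2)"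
    using assms by (simp add: koszul_explicit)
next
  fix z
  assume "vfield z \<and> (\<forall>w. vfield w \<longrightarrow>
      ip a b z w = (ip a b (vbracket u v) w - ip a b (vbracket v w) u + ip a b (vbracket w u) v) / 2)"
  then show "z = (\<lambda>t. u t * deriv v t + deriv (Tmap a b u v) t)"
    using assms by (intro ip_eq_all_imp_eq[OF assms(1,2)]) (simp_all add: koszul_explicit)
qed

lemma vfield_nabla [simp]: "a > 0 \<Longrightarrow> b > 0 \<Longrightarrow> vfield u \<Longrightarrow> vfield v \<Longrightarrow> vfield (nabla a b u v)"
  by (simp add: nabla_eq)

lemma nabla_koszul:
  "a > 0 \<Longrightarrow> b > 0 \<Longrightarrow> vfield u \<Longrightarrow> vfield v \<Longrightarrow> vfield w \<Longrightarrow>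
    ip a b (nabla a b u v) w
      = (ip a b (vbracket u v) w - ip a b (vbracket v w) u + ip a b (vbracket w u) v) / 2"
  by (simp add: nabla_eq koszul_explicit)

lemma ip_nabla_skew:
  assumes "a > 0" and "b > 0" and "vfield x" and "vfield y" and "vfield w"
  shows "ip a b (nabla a b x y) w = - ip a b (nabla a b x w) y"
  using assms ip_vbracket_swap[of w x] ip_vbracket_swap[of y w] ip_vbracket_swap[of x y]
  by (simp add: nabla_koszul field_simps)

lemma ip_nabla_torsion:
  assumes "a > 0" and "b > 0" and "vfield x" and "vfield y" and "vfield w"
  shows "ip a b (nabla a b y x) w = ip a b (nabla a b x y) w - ip a b (vbracket x y) w"
  using assms ip_vbracket_swap[of w x] ip_vbracket_swap[of y w] ip_vbracket_swap[of x y]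
  by (simp add: nabla_koszul)

lemma sect_koszul_form:
  assumes "a > 0" and "b > 0" and "vfield u" and "vfield v"
  shows "sect a b u v = - ip a b (nabla a b u u) (nabla a b v v)
      - ip a b (vbracket u v) (nabla a b u v) + ip a b (nabla a b u v) (nabla a b u v)
      - ip a b (nabla a b (vbracket u v) v) u"
proof -
  have "sect a b u v = ip a b (nabla a b u (nabla a b v v)) u - ip a b (nabla a b v (nabla a b u v)) u
      - ip a b (nabla a b (vbracket u v) v) u"
    using assms by (simp add: sect_def curv_def ip_diff_left)
  also have "ip a b (nabla a b u (nabla a b v v)) u = - ip a b (nabla a b u u) (nabla a b v v)"
    using assms by (intro ip_nabla_skew) simp_all
  also have "ip a b (nabla a b v (nabla a b u v)) u = - ip a b (nabla a b v u) (nabla a b u v)"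
    using assms by (intro ip_nabla_skew) simp_all
  also have "ip a b (nabla a b v u) (nabla a b u v)
      = ip a b (nabla a b u v) (nabla a b u v) - ip a b (vbracket u v) (nabla a b u v)"
    using assms by (intro ip_nabla_torsion) simp_all
  finally show ?thesis by simp
qed

section \<open>Sectional curvature\<close>

lemma ip_add_right:
  "vfield f \<Longrightarrow> vfield g \<Longrightarrow> vfield h \<Longrightarrow> ip a b h (\<lambda>x. f x + g x) = ip a b h f + ip a b h g"
  using ip_add_left ip_sym by metis

lemma ip_deriv_right:
  "vfield f \<Longrightarrow> vfield g \<Longrightarrow> ip a b f (deriv g) = intS1 (\<lambda>x. f x * deriv (Aop a b g) x)"
  using ip_sym[of a b f] ip_eq_intS1_Aop[of "deriv g" f] by (simp add: Aop_deriv mult.commute)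

lemma ip_deriv_deriv:
  assumes "b \<noteq> 0" and "vfield f" and "vfield g"
  shows "ip a b (deriv f) (deriv g) = intS1 (\<lambda>x. Aop a b f x * Aop a b g x) / b - a / b * ip a b f g"
proof -
  have "ip a b (deriv f) (deriv g) = intS1 (\<lambda>x. Aop a b f x * Aop a b g x / b
      - a / b * (a * f x * g x + b * deriv f x * deriv g x))"
    unfolding ip_def
    by (rule intS1_eq_by_deriv[where h = "\<lambda>x. a * (f x * deriv g x + deriv f x * g x)"])
       (use assms in \<open>simp_all add: Aop_def field_simps\<close>)
  also have "\<dots> = intS1 (\<lambda>x. Aop a b f x * Aop a b g x) / b - a / b * ip a b f g"
    using assms by (simp add: intS1_diff intS1_divide intS1_cmult ip_def)
  finally show ?thesis .
qed

lemma ip_add_deriv_add_deriv: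
  assumes "b \<noteq> 0" and "vfield f1" and "vfield f2" and "vfield g1" and "vfield g2"
  shows "ip a b (\<lambda>x. f1 x + deriv g1 x) (\<lambda>x. f2 x + deriv g2 x)
    = ip a b f1 f2 + intS1 (\<lambda>x. f1 x * deriv (Aop a b g2) x) + intS1 (\<lambda>x. f2 x * deriv (Aop a b g1) x)
      + intS1 (\<lambda>x. Aop a b g1 x * Aop a b g2 x) / b - a / b * ip a b g1 g2"
  using assms ip_sym[of a b "deriv g1" f2]
  by (simp add: ip_add_left ip_add_right ip_deriv_right[of f1] ip_deriv_right[of f2] ip_deriv_deriv)

lemma ip_add_deriv:
  "vfield f \<Longrightarrow> vfield g \<Longrightarrow> vfield h \<Longrightarrow>
    ip a b h (\<lambda>x. f x + deriv g x) = ip a b h f + intS1 (\<lambda>x. h x * deriv (Aop a b g) x)"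
  by (simp add: ip_add_right ip_deriv_right)

lemma ip_nabla_vbracket_left:
  assumes "a > 0" and "b > 0" and "vfield u" and "vfield v"
  shows "ip a b (nabla a b (vbracket u v) v) u = (intS1 (\<lambda>x. vbracket u v x * coad a b v u x)
      + ip a b (vbracket u v) (vbracket u v) - intS1 (\<lambda>x. vbracket u v x * coad a b u v x)) / 2"
  using assms ip_vbracket_swap[of u v a b "vbracket u v"] ip_vbracket_swap[of "vbracket u v" u a b v]
  by (simp add: nabla_koszul ip_vbracket_left[of "vbracket u v"])

definition metric_density :: "real \<Rightarrow> real \<Rightarrow> (real \<Rightarrow> real) \<Rightarrow> (real \<Rightarrow> real) \<Rightarrow> real \<Rightarrow> real" where
  "metric_density a b f g = (\<lambda>x. a * f x * g x + b * deriv f x * deriv g x)"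

lemma vfield_metric_density [simp]: "vfield f \<Longrightarrow> vfield g \<Longrightarrow> vfield (metric_density a b f g)"
  by (simp add: metric_density_def)

lemma intS1_metric_density [simp]: "intS1 (metric_density a b f g) = ip a b f g"
  by (simp add: metric_density_def ip_def)

text \<open>The integrand of \<open>sect_koszul_form\<close> after substituting the connection and expanding
  each pairing with the lemmas above, the two pairings of \<open>T\<close> being left out.\<close>

definition sect_density :: "real \<Rightarrow> real \<Rightarrow> (real \<Rightarrow> real) \<Rightarrow> (real \<Rightarrow> real) \<Rightarrow> real \<Rightarrow> real" where
  "sect_density a b u v = (\<lambda>t.
     - metric_density a b (\<lambda>s. u s * deriv u s) (\<lambda>s. v s * deriv v s) t
     - u t * deriv u t * deriv (Tsource a b v v) t - v t * deriv v t * deriv (Tsource a b u u) t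
     - Tsource a b u u t * Tsource a b v v t / b
     - metric_density a b (vbracket u v) (\<lambda>s. u s * deriv v s) t
     - vbracket u v t * deriv (Tsource a b u v) t
     + metric_density a b (\<lambda>s. u s * deriv v s) (\<lambda>s. u s * deriv v s) t
     + 2 * (u t * deriv v t * deriv (Tsource a b u v) t) + Tsource a b u v t * Tsource a b u v t / b
     - (vbracket u v t * coad a b v u t + metric_density a b (vbracket u v) (vbracket u v) t
        - vbracket u v t * coad a b u v t) / 2)"

lemma sect_eq_intS1_density:
  assumes "a > 0" and "b > 0" and "vfield u" and "vfield v"
  shows "sect a b u v = intS1 (sect_density a b u v)
     + a / b * ip a b (Tmap a b u u) (Tmap a b v v) - a / b * ip a b (Tmap a b u v) (Tmap a b u v)"
proof -
  have nabla: "nabla a b x y = (\<lambda>t. x t * deriv y t + deriv (Tmap a b x y) t)" if "vfield x" "vfield y" for x y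
    using nabla_eq assms(1,2) that .
  have "sect a b u v =
      - ip a b (\<lambda>t. u t * deriv u t + deriv (Tmap a b u u) t) (\<lambda>t. v t * deriv v t + deriv (Tmap a b v v) t)
      - ip a b (vbracket u v) (\<lambda>t. u t * deriv v t + deriv (Tmap a b u v) t)
      + ip a b (\<lambda>t. u t * deriv v t + deriv (Tmap a b u v) t) (\<lambda>t. u t * deriv v t + deriv (Tmap a b u v) t)
      - ip a b (nabla a b (vbracket u v) v) u"
    using sect_koszul_form[OF assms] by (simp add: nabla assms)
  also have "\<dots> = intS1 (sect_density a b u v)
     + a / b * ip a b (Tmap a b u u) (Tmap a b v v) - a / b * ip a b (Tmap a b u v) (Tmap a b u v)"
    using assms
    by (simp add: ip_add_deriv_add_deriv ip_add_deriv ip_nabla_vbracket_left Aop_Tmap sect_density_def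
        intS1_add intS1_diff intS1_minus intS1_divide intS1_cmult)
  finally show ?thesis .
qed

lemma intS1_sect_density:
  assumes "b > 0" and "vfield u" and "vfield v"
  shows "intS1 (sect_density a b u v) = - a / 2 * intS1 (\<lambda>x. (u x * deriv v x - v x * deriv u x)\<^sup>2)"
proof -
  have "intS1 (sect_density a b u v) = intS1 (\<lambda>x. - a / 2 * (u x * deriv v x - v x * deriv u x)\<^sup>2)"
  proof (rule intS1_eq_by_deriv[where h = "\<lambda>x. b / 2 * (u x * deriv (deriv u) x * v x * deriv v x
      + u x * deriv u x * v x * deriv (deriv v) x - deriv u x * deriv (deriv u) x * (v x)\<^sup>2
      - (u x)\<^sup>2 * deriv v x * deriv (deriv v) x)"])
    fix x
    show "sect_density a b u v x = - a / 2 * (u x * deriv v x - v x * deriv u x)\<^sup>2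
      + deriv (\<lambda>x. b / 2 * (u x * deriv (deriv u) x * v x * deriv v x
          + u x * deriv u x * v x * deriv (deriv v) x - deriv u x * deriv (deriv u) x * (v x)\<^sup>2
          - (u x)\<^sup>2 * deriv v x * deriv (deriv v) x)) x"
      using assms
      by (simp add: sect_density_def metric_density_def Tsource_def coad_def Aop_def vbracket_def
          field_simps power2_eq_square)
  qed (use assms in simp_all)
  then show ?thesis by (simp only: intS1_cmult)
qed

lemma sect_T_formula:
  assumes "a > 0" and "b > 0" and "vfield u" and "vfield v"
  shows "sect a b u v =
           - a / 2 * intS1 (\<lambda>x. (u x * deriv v x - v x * deriv u x)\<^sup>2)
           + a / b * ip a b (Tmap a b u u) (Tmap a b v v)
           - a / b * ip a b (Tmap a b u v) (Tmap a b u v)"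
  using sect_eq_intS1_density[OF assms] intS1_sect_density[OF assms(2-4)] by simp

lemma ip_minus_minus: "vfield f \<Longrightarrow> vfield g \<Longrightarrow> ip a b (\<lambda>x. - f x) (\<lambda>x. - g x) = ip a b f g"
  using ip_minus_left ip_sym by (metis vfield_minus minus_minus)

lemma ip_second_derivs:
  assumes "b \<noteq> 0" and "vfield f" and "vfield g"
  shows "ip a b (\<lambda>x. - deriv (deriv f) x) (\<lambda>x. - deriv (deriv g) x)
    = intS1 (\<lambda>x. deriv (Aop a b f) x * deriv (Aop a b g) x) / b
      - a / b\<^sup>2 * intS1 (\<lambda>x. Aop a b f x * Aop a b g x) + (a / b)\<^sup>2 * ip a b f g"
  using assms ip_deriv_deriv[OF assms(1), of "deriv f" "deriv g" a] ip_deriv_deriv[OF assms, of a]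
  by (simp add: ip_minus_minus Aop_deriv power2_eq_square field_simps)

lemma ip_Qmap:
  assumes "a > 0" and "b > 0" and "vfield x" and "vfield y" and "vfield x'" and "vfield y'"
  shows "ip a b (Qmap a b x y) (Qmap a b x' y')
      = intS1 (\<lambda>t. deriv (Tsource a b x y) t * deriv (Tsource a b x' y') t) / b
        - a / b\<^sup>2 * intS1 (\<lambda>t. Tsource a b x y t * Tsource a b x' y' t)
        + (a / b)\<^sup>2 * ip a b (Tmap a b x y) (Tmap a b x' y')"
proof -
  have "Qmap a b x y = (\<lambda>t. - deriv (deriv (Tmap a b x y)) t)" for x y
    by (simp add: Qmap_def Tmap_def)
  then show ?thesis using assms by (simp add: ip_second_derivs Aop_Tmap)
qed

lemma Tsource_identity:
  assumes "a \<noteq> 0" and "b \<noteq> 0" and "vfield u" and "vfield v"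
  shows "(a * (u x * deriv v x - v x * deriv u x)
           + b / 2 * (deriv v x * deriv (deriv u) x - deriv u x * deriv (deriv v) x))\<^sup>2 / a
       + (deriv (Tsource a b u u) x * deriv (Tsource a b v v) x
          - deriv (Tsource a b u v) x * deriv (Tsource a b u v) x) / a
       - (Tsource a b u u x * Tsource a b v v x - Tsource a b u v x * Tsource a b u v x) / b
     = - a / 2 * (u x * deriv v x - v x * deriv u x)\<^sup>2"
  using assms by (simp add: Tsource_def field_simps power2_eq_square)

lemma intS1_Tsource_identity:
  assumes "a \<noteq> 0" and "b \<noteq> 0" and "vfield u" and "vfield v"
  shows "intS1 (\<lambda>x. (a * (u x * deriv v x - v x * deriv u x)
           + b / 2 * (deriv v x * deriv (deriv u) x - deriv u x * deriv (deriv v) x))\<^sup>2) / a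
       + (intS1 (\<lambda>x. deriv (Tsource a b u u) x * deriv (Tsource a b v v) x)
          - intS1 (\<lambda>x. deriv (Tsource a b u v) x * deriv (Tsource a b u v) x)) / a
       - (intS1 (\<lambda>x. Tsource a b u u x * Tsource a b v v x)
          - intS1 (\<lambda>x. Tsource a b u v x * Tsource a b u v x)) / b
     = - a / 2 * intS1 (\<lambda>x. (u x * deriv v x - v x * deriv u x)\<^sup>2)"
proof -
  have linear: "intS1 (\<lambda>x. Z x / a + (P x - P' x) / a - (R x - R' x) / b)
      = intS1 Z / a + (intS1 P - intS1 P') / a - (intS1 R - intS1 R') / b"
    if "vfield Z" "vfield P" "vfield P'" "vfield R" "vfield R'" for Z P P' R R'
    using that by (simp add: intS1_add intS1_diff intS1_divide)
  have "intS1 (\<lambda>x. (a * (u x * deriv v x - v x * deriv u x)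
           + b / 2 * (deriv v x * deriv (deriv u) x - deriv u x * deriv (deriv v) x))\<^sup>2 / a
       + (deriv (Tsource a b u u) x * deriv (Tsource a b v v) x
          - deriv (Tsource a b u v) x * deriv (Tsource a b u v) x) / a
       - (Tsource a b u u x * Tsource a b v v x - Tsource a b u v x * Tsource a b u v x) / b)
     = - a / 2 * intS1 (\<lambda>x. (u x * deriv v x - v x * deriv u x)\<^sup>2)"
    unfolding intS1_cmult[symmetric]
    using assms by (intro arg_cong[where f = intS1] ext Tsource_identity) simp_all
  then show ?thesis using assms by (subst (asm) linear) simp_all
qed

lemma sect_Q_formula:
  assumes "a > 0" and "b > 0" and "vfield u" and "vfield v"
  shows "sect a b u v =
           1 / a * intS1 (\<lambda>x. (a * (u x * deriv v x - v x * deriv u x)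
                 + b / 2 * (deriv v x * deriv (deriv u) x - deriv u x * deriv (deriv v) x))\<^sup>2)
           + b / a * ip a b (Qmap a b u u) (Qmap a b v v)
           - b / a * ip a b (Qmap a b u v) (Qmap a b u v)"
proof -
  have combine: "S = 1 / a * Z + b / a * q12 - b / a * q33"
    if "S = - a / 2 * C + a / b * t12 - a / b * t33"
      and "Z / a + (P12 - P33) / a - (R12 - R33) / b = - a / 2 * C"
      and "q12 = P12 / b - a / b\<^sup>2 * R12 + (a / b)\<^sup>2 * t12"
      and "q33 = P33 / b - a / b\<^sup>2 * R33 + (a / b)\<^sup>2 * t33"
    for S C t12 t33 Z P12 P33 R12 R33 q12 q33
    unfolding that(1,3,4) that(2)[symmetric] using assms by (simp add: field_simps power2_eq_square)
  show ?thesis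
    using assms
    by (intro combine[OF sect_T_formula[OF assms] intS1_Tsource_identity ip_Qmap ip_Qmap]) simp_all
qed

theorem propositionA1:
  fixes a b :: real and u v :: "real \<Rightarrow> real"
  assumes "a > 0" and "b > 0" and "vfield u" and "vfield v"
  shows "(sect a b u v =
           - a / 2 * intS1 (\<lambda>x. (u x * deriv v x - v x * deriv u x)^2)
           + a / b * ip a b (Tmap a b u u) (Tmap a b v v)
           - a / b * ip a b (Tmap a b u v) (Tmap a b u v)) \<and>
         (sect a b u v =
           1 / a * intS1 (\<lambda>x. (a * (u x * deriv v x - v x * deriv u x)
                 + b / 2 * (deriv v x * deriv (deriv u) x - deriv u x * deriv (deriv v) x))^2)
           + b / a * ip a b (Qmap a b u u) (Qmap a b v v)
           - b / a * ip a b (Qmap a b u v) (Qmap a b u v))"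
  using sect_T_formula[OF assms] sect_Q_formula[OF assms] by blast

end
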